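(* Let $(U_n)_{n\ge1}$ be the virtual isometry sequence, $y_k^{(n)}$ the renormalized eigenangles and $y_k$ their almost sure limits, as described in the context. For every $0<\eta<\frac16$ there exists $\varepsilon>0$ such that almost surely there is a (random) constant $C>0$ with $$|y_k^{(n)} - y_k| \le C n^{-\varepsilon} \quad\text{for all } n\ge1 \text{ and all } k\in\mathbb{Z} \text{ with } |k|\le n^{\eta}.$$
   Context: Virtual isometry coupling: let $(x_n)_{n\ge1}$ be independent random vectors, $x_n$ uniform on the unit sphere of $\mathbb{C}^n$. Almost surely $x_n \neq e_n$ for all $n$, so there is a unique $R_n \in U(n)$ with $R_n(e_n)=x_n$ and $R_n - I_n$ of rank one. Set $U_1=x_1$ and $U_n = R_n \begin{pmatrix} U_{n-1} & 0 \\ 0 & 1\end{pmatrix}$ for $n\ge2$; each $U_n$ is Haar-distributed on $U(n)$. Almost surely the eigenvalues of $U_n$ are distinct and different from $1$. Let $(\theta_k^{(n)})_{k\in\mathbb{Z}}$ be the increasing enumeration of all real $\theta$ with $e^{i\theta}$ an eigenvalue of $U_n$, indexed so that $\dots<\theta_0^{(n)}<0<\theta_1^{(n)}<\dots$, and $y_k^{(n)}=\frac{n}{2\pi}\theta_k^{(n)}$. It is known (result of Maples, Najnudel and Nikeghbali, taken as given) that almost surely $y_k^{(n)}\to y_k$ for every $k$, where $(y_k)$ is a sine-kernel determinantal point process, and that almost surely, for every $\delta>0$, there is a random constant $C_\delta$ (independent of $k,n$) with $|y_k^{(n)}-y_k|\le C_\delta(1+k^2)n^{-1/3+\delta}$ for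 all $n$ and all $k\in[-n^{1/4},n^{1/4}]$. *)

theory Defs
  imports "HOL-Probability.Probability"
begin

type_synonym cmatrix = "nat \<Rightarrow> nat \<Rightarrow> complex"
type_synonym cvector = "nat \<Rightarrow> complex"

definition is_cmat :: "nat \<Rightarrow> cmatrix \<Rightarrow> bool" where
  "is_cmat n A \<longleftrightarrow> (\<forall>i j. (n \<le> i \<or> n \<le> j) \<longrightarrow> A i j = 0)"

definition cmat_mult :: "nat \<Rightarrow> cmatrix \<Rightarrow> cmatrix \<Rightarrow> cmatrix" where
  "cmat_mult n A B = (\<lambda>i j. if i < n \<and> j < n then (\<Sum>l<n. A i l * B l j) else 0)"

definition cmat_id :: "nat \<Rightarrow> cmatrix" where
  "cmat_id n = (\<lambda>i j. if i = j \<and> i < n then 1 else 0)"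

definition cmat_adj :: "cmatrix \<Rightarrow> cmatrix" where
  "cmat_adj A = (\<lambda>i j. cnj (A j i))"

definition unitary_cmat :: "nat \<Rightarrow> cmatrix \<Rightarrow> bool" where
  "unitary_cmat n A \<longleftrightarrow> is_cmat n A \<and> cmat_mult n (cmat_adj A) A = cmat_id n"

definition rank_one_cmat :: "nat \<Rightarrow> cmatrix \<Rightarrow> bool" where
  "rank_one_cmat n D \<longleftrightarrow> (\<exists>u w :: cvector. (\<forall>i. n \<le> i \<longrightarrow> u i = 0 \<and> w i = 0) \<and>
      (\<exists>i<n. u i \<noteq> 0) \<and> (\<exists>i<n. w i \<noteq> 0) \<and> (\<forall>i j. D i j = u i * cnj (w j)))"

text \<open>The unique unitary R of size n with R e_n = v and R - I of rank one
  (e_n is the last basis vector, index n-1).\<close>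
definition refl_map :: "nat \<Rightarrow> cvector \<Rightarrow> cmatrix" where
  "refl_map n v = (THE R. unitary_cmat n R \<and> (\<forall>i<n. R i (n - 1) = v i) \<and>
                          rank_one_cmat n (\<lambda>i j. R i j - cmat_id n i j))"

definition extend_one :: "nat \<Rightarrow> cmatrix \<Rightarrow> cmatrix" where
  "extend_one n A = (\<lambda>i j. if i < n \<and> j < n then A i j else if i = n \<and> j = n then 1 else 0)"

text \<open>Virtual isometry: xs n is the vector x_n of C^n (coordinates 0..n-1).\<close>
fun virt_iso :: "(nat \<Rightarrow> cvector) \<Rightarrow> nat \<Rightarrow> cmatrix" where
  "virt_iso xs 0 = (\<lambda>i j. 0)"
| "virt_iso xs (Suc 0) = (\<lambda>i j. if i = 0 \<and> j = 0 then xs 1 0 else 0)"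
| "virt_iso xs (Suc (Suc m)) =
     cmat_mult (Suc (Suc m)) (refl_map (Suc (Suc m)) (xs (Suc (Suc m))))
               (extend_one (Suc m) (virt_iso xs (Suc m)))"

definition is_eigenvalue :: "nat \<Rightarrow> cmatrix \<Rightarrow> complex \<Rightarrow> bool" where
  "is_eigenvalue n A c \<longleftrightarrow> (\<exists>v :: cvector. (\<forall>i. n \<le> i \<longrightarrow> v i = 0) \<and> (\<exists>i<n. v i \<noteq> 0) \<and>
      (\<forall>i<n. (\<Sum>j<n. A i j * v j) = c * v i))"

definition eigenangles :: "nat \<Rightarrow> cmatrix \<Rightarrow> real set" where
  "eigenangles n A = {\<theta>. is_eigenvalue n A (cis \<theta>)}"

text \<open>Increasing enumeration (theta_k)_{k in Z} of all eigenangles (lifted to R),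
  with theta_0 < 0 < theta_1.\<close>
definition eigenangle :: "nat \<Rightarrow> cmatrix \<Rightarrow> int \<Rightarrow> real" where
  "eigenangle n A k =
     (if 1 \<le> k then (THE t. t \<in> eigenangles n A \<and> 0 < t \<and>
                        card {s \<in> eigenangles n A. 0 < s \<and> s \<le> t} = nat k)
      else (THE t. t \<in> eigenangles n A \<and> t < 0 \<and>
                        card {s \<in> eigenangles n A. t \<le> s \<and> s < 0} = nat (1 - k)))"

definition renorm_angle :: "(nat \<Rightarrow> cvector) \<Rightarrow> nat \<Rightarrow> int \<Rightarrow> real" where
  "renorm_angle xs n k = real n / (2 * pi) * eigenangle n (virt_iso xs n) k"

definition cvec_space :: "nat \<Rightarrow> (nat \<Rightarrow> complex) measure" where
  "cvec_space n = PiM {..<n} (\<lambda>_. borel)"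

definition cvec_norm :: "nat \<Rightarrow> cvector \<Rightarrow> real" where
  "cvec_norm n v = sqrt (\<Sum>i<n. (cmod (v i))\<^sup>2)"

text \<open>Uniform (normalized surface) measure on the unit sphere of C^n, realized as the
  radial projection of the normalized Lebesgue measure on the closed unit ball.\<close>
definition uniform_sphere :: "nat \<Rightarrow> (nat \<Rightarrow> complex) measure" where
  "uniform_sphere n =
     distr (uniform_measure (PiM {..<n} (\<lambda>_. lborel))
              {v \<in> space (PiM {..<n} (\<lambda>_. (lborel :: complex measure))). cvec_norm n v \<le> 1})
           (cvec_space n)
           (\<lambda>v. restrict (\<lambda>i. v i / complex_of_real (cvec_norm n v)) {..<n})"

end

theory Submission
  imports Defs
begin

text \<open>That bound holds on the window |k| \<le> n^(1/4), which contains
  |k| \<le> n^\<eta>, and there 1 + k^2 \<le> 2 n^(2\<eta>); so the error is O(n^(2\<eta> - 1/3 + \<delta>)).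
  Choosing \<delta> = \<epsilon> = 1/6 - \<eta> turns this exponent into -\<epsilon>.\<close>

lemma one_plus_square_le_powr:
  fixes n :: nat and k :: int
  assumes "1 \<le> n" "0 \<le> \<eta>" "\<bar>real_of_int k\<bar> \<le> real n powr \<eta>"
  shows "1 + (real_of_int k)\<^sup>2 \<le> 2 * real n powr (2 * \<eta>)"
proof -
  have "(real_of_int k)\<^sup>2 \<le> (real n powr \<eta>)\<^sup>2"
    using assms(3) by (metis abs_ge_zero power2_abs power_mono)
  also have "\<dots> = real n powr (2 * \<eta>)"
    by (simp add: power2_eq_square powr_add[symmetric])
  finally have "(real_of_int k)\<^sup>2 \<le> real n powr (2 * \<eta>)" .
  moreover have "1 \<le> real n powr (2 * \<eta>)"
    using assms(1,2) by (simp add: ge_one_powr_ge_zero)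
  ultimately show ?thesis by linarith
qed

lemma powr_window_bound:
  fixes d :: "nat \<Rightarrow> int \<Rightarrow> real"
  assumes "0 \<le> \<eta>" "\<eta> \<le> 1/4"
    and bound: "\<forall>n\<ge>1. \<forall>k::int.
        - (real n powr (1/4)) \<le> real_of_int k \<and> real_of_int k \<le> real n powr (1/4) \<longrightarrow>
        \<bar>d n k\<bar> \<le> C * (1 + (real_of_int k)\<^sup>2) * real n powr e"
  shows "\<exists>C'>0. \<forall>n\<ge>1. \<forall>k::int. \<bar>real_of_int k\<bar> \<le> real n powr \<eta> \<longrightarrow>
           \<bar>d n k\<bar> \<le> C' * real n powr (2 * \<eta> + e)"
proof (intro exI[of _ "2 * \<bar>C\<bar> + 1"] conjI allI impI)
  fix n :: nat and k :: int
  assume n: "1 \<le> n" and k: "\<bar>real_of_int k\<bar> \<le> real n powr \<eta>"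
  have "real n powr \<eta> \<le> real n powr (1/4)"
    using n assms(2) by (intro powr_mono) auto
  then have "- (real n powr (1/4)) \<le> real_of_int k \<and> real_of_int k \<le> real n powr (1/4)"
    using k by linarith
  then have "\<bar>d n k\<bar> \<le> C * (1 + (real_of_int k)\<^sup>2) * real n powr e"
    using bound n by blast
  also have "\<dots> \<le> \<bar>C\<bar> * (2 * real n powr (2 * \<eta>)) * real n powr e"
    using one_plus_square_le_powr[OF n assms(1) k]
    by (intro mult_right_mono) (auto intro: order.trans[OF mult_right_mono mult_left_mono])
  also have "\<dots> = 2 * \<bar>C\<bar> * real n powr (2 * \<eta> + e)"
    by (simp add: powr_add)
  also have "\<dots> \<le> (2 * \<bar>C\<bar> + 1) * real n powr (2 * \<eta> + e)"
    by (intro mult_right_mono) auto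
  finally show "\<bar>d n k\<bar> \<le> (2 * \<bar>C\<bar> + 1) * real n powr (2 * \<eta> + e)" .
qed simp

theorem lemma3p3:
  fixes M :: "'w measure"
    and x :: "nat \<Rightarrow> 'w \<Rightarrow> nat \<Rightarrow> complex"
    and y :: "'w \<Rightarrow> int \<Rightarrow> real"
  assumes "prob_space M"
    and indep: "prob_space.indep_vars M cvec_space (\<lambda>n \<omega>. restrict (x n \<omega>) {..<n}) {1..}"
    and unif: "\<And>n. 1 \<le> n \<Longrightarrow>
                 distr M (cvec_space n) (\<lambda>\<omega>. restrict (x n \<omega>) {..<n}) = uniform_sphere n"
    and conv: "AE \<omega> in M. \<forall>k. (\<lambda>n. renorm_angle (\<lambda>m. x m \<omega>) n k) \<longlonglongrightarrow> y \<omega> k"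
    and MNN: "AE \<omega> in M. \<forall>\<delta>>0. \<exists>C. \<forall>n\<ge>1. \<forall>k::int.
                 - (real n powr (1/4)) \<le> real_of_int k \<and> real_of_int k \<le> real n powr (1/4) \<longrightarrow>
                 \<bar>renorm_angle (\<lambda>m. x m \<omega>) n k - y \<omega> k\<bar>
                   \<le> C * (1 + (real_of_int k)\<^sup>2) * real n powr (-1/3 + \<delta>)"
  shows "\<forall>\<eta>::real. 0 < \<eta> \<and> \<eta> < 1/6 \<longrightarrow>
           (\<exists>\<epsilon>>0. AE \<omega> in M. \<exists>C>0. \<forall>n\<ge>1. \<forall>k::int.
              \<bar>real_of_int k\<bar> \<le> real n powr \<eta> \<longrightarrow>
              \<bar>renorm_angle (\<lambda>m. x m \<omega>) n k - y \<omega> k\<bar> \<le> C * real n powr (-\<epsilon>))"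
proof (intro allI impI)
  fix \<eta> :: real
  assume \<eta>: "0 < \<eta> \<and> \<eta> < 1/6"
  define \<epsilon> where "\<epsilon> = 1/6 - \<eta>"
  have exponent: "2 * \<eta> + (-1/3 + \<epsilon>) = - \<epsilon>"
    by (simp add: \<epsilon>_def)
  show "\<exists>\<epsilon>>0. AE \<omega> in M. \<exists>C>0. \<forall>n\<ge>1. \<forall>k::int.
          \<bar>real_of_int k\<bar> \<le> real n powr \<eta> \<longrightarrow>
          \<bar>renorm_angle (\<lambda>m. x m \<omega>) n k - y \<omega> k\<bar> \<le> C * real n powr (-\<epsilon>)"
  proof (intro exI[of _ \<epsilon>] conjI)
    show \<epsilon>_pos: "0 < \<epsilon>" using \<eta> by (simp add: \<epsilon>_def)
    show "AE \<omega> in M. \<exists>C>0. \<forall>n\<ge>1. \<forall>k::int.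
          \<bar>real_of_int k\<bar> \<le> real n powr \<eta> \<longrightarrow>
          \<bar>renorm_angle (\<lambda>m. x m \<omega>) n k - y \<omega> k\<bar> \<le> C * real n powr (-\<epsilon>)"
      using MNN
    proof eventually_elim
      case (elim \<omega>)
      then obtain C where "\<forall>n\<ge>1. \<forall>k::int.
          - (real n powr (1/4)) \<le> real_of_int k \<and> real_of_int k \<le> real n powr (1/4) \<longrightarrow>
          \<bar>renorm_angle (\<lambda>m. x m \<omega>) n k - y \<omega> k\<bar>
            \<le> C * (1 + (real_of_int k)\<^sup>2) * real n powr (-1/3 + \<epsilon>)"
        using \<epsilon>_pos by blast
      from powr_window_bound[OF _ _ this, of \<eta>] \<eta> show ?case
        unfolding exponent by simp
    qed
  qed
qed

end
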